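(* Let $b_1,\dots,b_n$ be nonzero real numbers and consider the boundary conditions $$y_k(\ell)=c_ky_k(0),\qquad c_k\neq0,\quad k=1,\dots,n,$$ i.e. $Cy(0)+Dy(\ell)=0$ with $C=\operatorname{diag}(c_1,\dots,c_n)$ and $D=-I_n$. Then these boundary conditions are regular, and: (i) Let $\Lambda_0=\{\lambda_m^0\}_{m\in\mathbb Z}$ be the sequence of zeros of $\Delta_0$ (counting multiplicity), ordered so that $\operatorname{Re}\lambda_m^0\le\operatorname{Re}\lambda_{m+1}^0$. Then there is a sequence of integers $\{m_k\}_{k\in\mathbb Z}$ with $$m_k<m_{k+1}\le m_k+n,\qquad \operatorname{Re}\lambda^0_{m_k}-\operatorname{Re}\lambda^0_{m_k-1}\ge\varepsilon,\qquad k\in\mathbb Z,$$ where $\varepsilon=\frac{2\pi}{b_{\max}n}$, $b_{\max}=\max\{|b_1|,\dots,|b_n|\}$. (ii) If $b_j\ln|c_k|\neq b_k\ln|c_j|$ for all $j\ne k$, then the boundary conditions are strictly regular. (iii) The boundary conditions are strictly regular if and only if for all $j\ne k$: either $b_j\ln|c_k|\ne b_k\ln|c_j|$, or ($b_j/b_k\in\mathbb Q$ and $\frac{b_j\arg(c_k)-b_k\arg(c_j)}{2\pi\gcd(b_j,b_k)}\notin\mathbb Z$). (iv) Periodic boundary conditions ($c_1=\dots=c_n=1$) are never strictly regular. Antiperiodic boundary conditions ($c_1=\dots=c_n=-1$) are strictly regular if and only if there exist $b_0>0$, odd integers $M_1,\dots,M_n$ and distinct nonnegative integers $a_1,\dots,a_n$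 with $b_k=2^{a_k}M_kb_0$, $k=1,\dots,n$. In particular, if $b_k=2^k$ for $k=1,\dots,n$, antiperiodic boundary conditions are strictly regular.
   Context: Given nonzero reals $b_1,\dots,b_n$ and $C,D\in\mathbb C^{n\times n}$ with $\operatorname{rank}(C\ D)=n$, set $\Delta_0(\lambda)=\det\big(C+D\operatorname{diag}(e^{i\lambda b_1},\dots,e^{i\lambda b_n})\big)$. Let $P_+=\operatorname{diag}(p_1^+,\dots,p_n^+)$ with $p_k^+=1$ if $b_k>0$ and $0$ if $b_k<0$, and $P_-=I_n-P_+$. The boundary conditions $Cy(0)+Dy(\ell)=0$ are regular if $\det(CP_-+DP_+)\ne0$ and $\det(CP_++DP_-)\ne0$. A sequence $\{\mu_m\}_{m\in\mathbb Z}$ is asymptotically separated if for some $m_0$ and $\delta>0$, $|\mu_j-\mu_k|>2\delta$ whenever $j\ne k$, $|j|,|k|>m_0$. The boundary conditions are strictly regular if they are regular and the sequence of zeros of $\Delta_0$ (counting multiplicity) is asymptotically separated. For reals $x,y\ne0$ with $x/y\in\mathbb Q$, $\gcd(x,y)$ is the largest $b>0$ with $x/b,y/b\in\mathbb Z$. *)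

theory Defs
  imports "HOL-Complex_Analysis.Complex_Analysis"
begin

definition diag_mat :: "('n::finite \<Rightarrow> complex) \<Rightarrow> complex^'n^'n" where
  "diag_mat f = (\<chi> i j. if i = j then f i else 0)"

definition Delta0 :: "('n::finite \<Rightarrow> real) \<Rightarrow> complex^'n^'n \<Rightarrow> complex^'n^'n \<Rightarrow> complex \<Rightarrow> complex" where
  "Delta0 b C D z = det (C + D ** diag_mat (\<lambda>k. exp (\<i> * z * complex_of_real (b k))))"

definition P_plus :: "('n::finite \<Rightarrow> real) \<Rightarrow> complex^'n^'n" where
  "P_plus b = diag_mat (\<lambda>k. if b k > 0 then 1 else 0)"

definition P_minus :: "('n::finite \<Rightarrow> real) \<Rightarrow> complex^'n^'n" where
  "P_minus b = mat 1 - P_plus b"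

definition regular_bc :: "('n::finite \<Rightarrow> real) \<Rightarrow> complex^'n^'n \<Rightarrow> complex^'n^'n \<Rightarrow> bool" where
  "regular_bc b C D \<longleftrightarrow> det (C ** P_minus b + D ** P_plus b) \<noteq> 0 \<and> det (C ** P_plus b + D ** P_minus b) \<noteq> 0"

definition zero_seq :: "(complex \<Rightarrow> complex) \<Rightarrow> (int \<Rightarrow> complex) \<Rightarrow> bool" where
  "zero_seq f Lam \<longleftrightarrow> (\<forall>z. finite {m. Lam m = z} \<and>
      card {m. Lam m = z} = (if f z = 0 then nat (zorder f z) else 0))"

definition asymp_separated :: "(int \<Rightarrow> complex) \<Rightarrow> bool" where
  "asymp_separated mu \<longleftrightarrow> (\<exists>m0::int. \<exists>\<delta>::real. \<delta> > 0 \<and>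
      (\<forall>j k. j \<noteq> k \<and> \<bar>j\<bar> > m0 \<and> \<bar>k\<bar> > m0 \<longrightarrow> cmod (mu j - mu k) > 2 * \<delta>))"

definition strictly_regular_bc :: "('n::finite \<Rightarrow> real) \<Rightarrow> complex^'n^'n \<Rightarrow> complex^'n^'n \<Rightarrow> bool" where
  "strictly_regular_bc b C D \<longleftrightarrow> regular_bc b C D \<and>
      (\<exists>Lam. zero_seq (Delta0 b C D) Lam \<and> asymp_separated Lam)"

text \<open>gcd of two nonzero reals with rational ratio.\<close>
definition real_gcd :: "real \<Rightarrow> real \<Rightarrow> real" where
  "real_gcd x y = (GREATEST g. g > 0 \<and> x / g \<in> \<int> \<and> y / g \<in> \<int>)"

end

(*
  For C = diag c and D = -I the characteristic determinant is the product of the factors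
  c_k - exp (i z b_k). The k-th factor has simple zeros exactly on the horizontal lattice
  (Arg c_k + 2 pi m - i ln |c_k|) / b_k, m in Z, so an enumeration of the zeros of Delta_0
  with multiplicities is nothing but a bijective reindexing of the family of all these
  lattice points, and asymptotic separation is invariant under such reindexing.

  A vertical strip of width 2 pi / b_max meets each lattice in at most one point, so every
  n + 1 consecutive zeros spread over at least that width and one of the n gaps between them
  is at least 2 pi / (b_max n). Separation of the whole family reduces to separation of each
  pair of lattices. Two lattices on different horizontal lines are separated; on the same
  line they come arbitrarily close, by Kronecker's theorem when b_j / b_k is irrational and
  by Bezout's identity when the ratio is rational and the offset between them is an integer
  multiple of 2 pi gcd(b_j, b_k). For c = -1 all lattices lie on the real axis and the offset
  condition says that b_j / b_k is a quotient of two odd integers, so strict regularity means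
  that all ratios are rational and the powers of two in the b_k are pairwise distinct.
*)
theory Submission
  imports Defs "HOL-Analysis.Kronecker_Approximation_Theorem"
begin

section \<open>Reindexing families with equal fibres\<close>

lemma obtain_bij_fibres:
  fixes f :: "'a \<Rightarrow> 'c" and g :: "'b \<Rightarrow> 'c"
  assumes "\<And>z. finite {x. f x = z}" "\<And>z. finite {y. g y = z}"
    and "\<And>z. card {x. f x = z} = card {y. g y = z}"
  obtains \<phi> where "bij \<phi>" "f = g \<circ> \<phi>"
proof -
  have "\<forall>z. \<exists>\<psi>. bij_betw \<psi> {x. f x = z} {y. g y = z}"
    using assms finite_same_card_bij by blast
  then obtain \<psi> where \<psi>: "\<And>z. bij_betw (\<psi> z) {x. f x = z} {y. g y = z}"
    by metis
  define \<phi> where "\<phi> x = \<psi> (f x) x" for x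
  have g_\<phi>: "g (\<phi> x) = f x" for x
    using bij_betwE[OF \<psi>[of "f x"]] by (auto simp: \<phi>_def)
  have "inj \<phi>"
  proof (rule injI)
    fix x y assume "\<phi> x = \<phi> y"
    moreover from this have "f x = f y" using g_\<phi> by metis
    ultimately show "x = y"
      using bij_betw_imp_inj_on[OF \<psi>[of "f x"]] by (auto simp: \<phi>_def inj_on_def)
  qed
  moreover have "surj \<phi>"
  proof -
    have "\<exists>x. y = \<phi> x" for y
    proof -
      obtain x where "f x = g y" "\<psi> (g y) x = y"
        using bij_betw_imp_surj_on[OF \<psi>[of "g y"]] by force
      then show ?thesis unfolding \<phi>_def by metis
    qed
    then show ?thesis by (simp add: surj_def)
  qed
  moreover have "f = g \<circ> \<phi>" using g_\<phi> by auto
  ultimately show ?thesis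
    using that by (simp add: bij_def)
qed

lemma fibres_comp_bij:
  assumes "bij \<phi>" "finite {y. g y = z}"
  shows "finite {x. (g \<circ> \<phi>) x = z}" "card {x. (g \<circ> \<phi>) x = z} = card {y. g y = z}"
proof -
  have fibre: "{x. (g \<circ> \<phi>) x = z} = \<phi> -` {y. g y = z}" by auto
  have "inj \<phi>" "surj \<phi>" using assms(1) by (auto simp: bij_def)
  show "finite {x. (g \<circ> \<phi>) x = z}"
    unfolding fibre using assms(2) \<open>inj \<phi>\<close> by (rule finite_vimageI)
  show "card {x. (g \<circ> \<phi>) x = z} = card {y. g y = z}"
    unfolding fibre using \<open>inj \<phi>\<close> \<open>surj \<phi>\<close> by (intro card_vimage_inj) auto
qed

definition eventually_separated :: "('i \<Rightarrow> 'a::metric_space) \<Rightarrow> bool" where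
  "eventually_separated f \<longleftrightarrow> (\<exists>\<delta>>0. \<exists>F. finite F \<and>
      (\<forall>i j. i \<notin> F \<longrightarrow> j \<notin> F \<longrightarrow> i \<noteq> j \<longrightarrow> \<delta> < dist (f i) (f j)))"

lemma eventually_separated_comp_inj:
  assumes "eventually_separated f" "inj \<phi>"
  shows "eventually_separated (f \<circ> \<phi>)"
proof -
  obtain \<delta> F where "\<delta> > 0" "finite F"
    and sep: "\<And>i j. i \<notin> F \<Longrightarrow> j \<notin> F \<Longrightarrow> i \<noteq> j \<Longrightarrow> \<delta> < dist (f i) (f j)"
    using assms(1) unfolding eventually_separated_def by blast
  moreover have "finite (\<phi> -` F)" using \<open>finite F\<close> assms(2) by (rule finite_vimageI)
  moreover have "\<delta> < dist ((f \<circ> \<phi>) i) ((f \<circ> \<phi>) j)" if "i \<notin> \<phi> -` F" "j \<notin> \<phi> -` F" "i \<noteq> j" for i j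
    using that sep injD[OF assms(2)] by fastforce
  ultimately show ?thesis unfolding eventually_separated_def by blast
qed

lemma eventually_separated_comp_bij:
  assumes "bij \<phi>"
  shows "eventually_separated (f \<circ> \<phi>) \<longleftrightarrow> eventually_separated f"
proof
  have "f \<circ> \<phi> \<circ> inv \<phi> = f"
    using assms by (metis bij_is_surj comp_id o_assoc surj_iff)
  moreover have "inj (inv \<phi>)"
    using assms by (simp add: bij_imp_bij_inv bij_is_inj)
  ultimately show "eventually_separated (f \<circ> \<phi>) \<Longrightarrow> eventually_separated f"
    by (metis eventually_separated_comp_inj)
qed (use assms bij_is_inj eventually_separated_comp_inj in blast)

lemma finite_abs_bounded:
  fixes F :: "'a set" and h :: "'a \<Rightarrow> int"
  assumes "finite F"
  obtains N where "\<And>x. x \<in> F \<Longrightarrow> \<bar>h x\<bar> \<le> N"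
  using assms that[of "Max ((\<lambda>x. \<bar>h x\<bar>) ` F)"] by (auto intro: Max_ge)

lemma asymp_separated_iff_eventually_separated:
  "asymp_separated Lam \<longleftrightarrow> eventually_separated Lam"
proof
  assume "asymp_separated Lam"
  then obtain m0 \<delta> where "\<delta> > 0"
    and "\<And>j k. j \<noteq> k \<Longrightarrow> m0 < \<bar>j\<bar> \<Longrightarrow> m0 < \<bar>k\<bar> \<Longrightarrow> 2 * \<delta> < cmod (Lam j - Lam k)"
    unfolding asymp_separated_def by blast
  then show "eventually_separated Lam"
    unfolding eventually_separated_def dist_norm
    by (intro exI[of _ "2 * \<delta>"] conjI exI[of _ "{-m0..m0}"]) auto
next
  assume "eventually_separated Lam"
  then obtain \<delta> F where "\<delta> > 0" "finite F"
    and sep: "\<And>i j. i \<notin> F \<Longrightarrow> j \<notin> F \<Longrightarrow> i \<noteq> j \<Longrightarrow> \<delta> < cmod (Lam i - Lam j)"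
    unfolding eventually_separated_def dist_norm by blast
  obtain m0 where m0: "\<And>i. i \<in> F \<Longrightarrow> \<bar>i\<bar> \<le> m0"
    using finite_abs_bounded[OF \<open>finite F\<close>, of id] by auto
  show "asymp_separated Lam"
    unfolding asymp_separated_def
  proof (intro exI[of _ m0] exI[of _ "\<delta> / 2"] conjI allI impI)
    show "0 < \<delta> / 2" using \<open>\<delta> > 0\<close> by simp
    fix j k assume jk: "j \<noteq> k \<and> m0 < \<bar>j\<bar> \<and> m0 < \<bar>k\<bar>"
    then have "j \<notin> F" "k \<notin> F" using m0 by force+
    then show "2 * (\<delta> / 2) < cmod (Lam j - Lam k)" using sep jk by simp
  qed
qed

section \<open>Integer sequences with bounded gaps\<close>

lemma mono_int_step:
  fixes f :: "int \<Rightarrow> 'a::order"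
  assumes "\<And>m. f m \<le> f (m + 1)"
  shows "mono f"
proof (rule monoI)
  fix i j :: int assume "i \<le> j"
  then show "f i \<le> f j"
    by (induction j rule: int_ge_induct) (auto intro: order_trans assms)
qed

lemma bounded_gaps_successor:
  fixes G :: "int set" and d :: int
  assumes G: "\<And>m. \<exists>i\<in>G. m < i \<and> i \<le> m + d"
  obtains up down :: "int \<Rightarrow> int"
  where "\<And>x. up x \<in> G" "\<And>x. x < up x" "\<And>x. up x \<le> x + d"
    and "\<And>x. down x \<in> G" "\<And>x. x \<in> G \<Longrightarrow> up (down x) = x"
proof -
  define up where "up x = Min (G \<inter> {x<..x + d})" for x
  define down where "down x = Max (G \<inter> {x - d..<x})" for x
  have up: "up x \<in> G" "x < up x" "up x \<le> x + d" "\<And>y. y \<in> G \<Longrightarrow> x < y \<Longrightarrow> up x \<le> y" for x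
  proof -
    have "G \<inter> {x<..x + d} \<noteq> {}" using G[of x] by auto
    then have "up x \<in> G \<inter> {x<..x + d}" unfolding up_def by (intro Min_in) auto
    then show "up x \<in> G" "x < up x" "up x \<le> x + d" by auto
    show "up x \<le> y" if "y \<in> G" "x < y" for y
    proof (cases "y \<le> x + d")
      case True then show ?thesis using that unfolding up_def by (intro Min_le) auto
    qed (use \<open>up x \<le> x + d\<close> in auto)
  qed
  have down: "down x \<in> G" "down x < x" "\<And>y. y \<in> G \<Longrightarrow> y < x \<Longrightarrow> y \<le> down x" for x
  proof -
    have "G \<inter> {x - d..<x} \<noteq> {}" using G[of "x - d - 1"] by auto
    then have "down x \<in> G \<inter> {x - d..<x}" unfolding down_def by (intro Max_in) auto
    then show "down x \<in> G" "down x < x" by auto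
    show "y \<le> down x" if "y \<in> G" "y < x" for y
    proof (cases "x - d \<le> y")
      case True then show ?thesis using that unfolding down_def by (intro Max_ge) auto
    qed (use \<open>down x \<in> G \<inter> {x - d..<x}\<close> in auto)
  qed
  have "up (down x) = x" if "x \<in> G" for x
    using up(1,2)[of "down x"] up(4)[of x "down x"] down(2) down(3)[of "up (down x)" x] that
    by fastforce
  then show ?thesis
    by (rule that[of up down, OF up(1-3) down(1)])
qed

lemma int_enumeration_bounded_gaps:
  fixes G :: "int set" and d :: int
  assumes G: "\<And>m. \<exists>i\<in>G. m < i \<and> i \<le> m + d"
  obtains mk :: "int \<Rightarrow> int" where "\<And>k. mk k \<in> G" "\<And>k. mk k < mk (k + 1)" "\<And>k. mk (k + 1) \<le> mk k + d"
proof -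
  obtain up down where up: "\<And>x. up x \<in> G" "\<And>x. x < up x" "\<And>x. up x \<le> x + d"
    and down: "\<And>x. down x \<in> G" and up_down: "\<And>x. x \<in> G \<Longrightarrow> up (down x) = x"
    using bounded_gaps_successor[OF G] by blast
  obtain g0 where "g0 \<in> G" using G by blast
  define mk where "mk k = (if 0 \<le> k then (up ^^ nat k) g0 else (down ^^ nat (- k)) g0)" for k
  have mk_in: "mk k \<in> G" for k
  proof -
    have "(up ^^ j) g0 \<in> G" "(down ^^ j) g0 \<in> G" for j
      by (induction j) (use \<open>g0 \<in> G\<close> up down in auto)
    then show ?thesis by (simp add: mk_def)
  qed
  have mk_step: "mk (k + 1) = up (mk k)" for k
  proof (cases "0 \<le> k")
    case True
    then have "nat (k + 1) = Suc (nat k)" by simp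
    with True show ?thesis by (simp add: mk_def)
  next
    case False
    have "mk (k + 1) = (down ^^ nat (- (k + 1))) g0"
      using False by (cases "k = -1") (simp_all add: mk_def)
    moreover have "nat (- k) = Suc (nat (- (k + 1)))" using False by simp
    ultimately have "mk k = down (mk (k + 1))"
      using False by (simp add: mk_def)
    then show ?thesis using up_down[OF mk_in] by simp
  qed
  show ?thesis
    by (rule that[of mk]) (simp_all add: mk_in mk_step up(2,3))
qed

lemma large_step_in_block:
  fixes x :: "int \<Rightarrow> real" and n :: nat
  assumes "n > 0" "W \<le> x (m + int n) - x m"
  shows "\<exists>i. m < i \<and> i \<le> m + int n \<and> W / n \<le> x i - x (i - 1)"
proof (rule ccontr)
  assume "\<not> ?thesis"
  then have small: "x (m + int (Suc d)) - x (m + int d) < W / n" if "d < n" for d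
    using that by (auto dest!: spec[of _ "m + int (Suc d)"])
  have "x (m + int n) - x m = (\<Sum>d<n. x (m + int (Suc d)) - x (m + int d))"
    by (subst sum_lessThan_telescope) simp
  also have "\<dots> < (\<Sum>d<n. W / n)"
    using assms(1) small by (intro sum_strict_mono) auto
  also have "\<dots> = W" using assms(1) by simp
  finally show False using assms(2) by simp
qed

section \<open>Diophantine approximation\<close>

lemma not_Ints_imp_bounded_away:
  fixes t :: real
  assumes "t \<notin> \<int>"
  obtains e where "e > 0" "\<And>s::int. e \<le> \<bar>of_int s - t\<bar>"
proof
  show "min (frac t) (1 - frac t) > 0" using assms frac_lt_1 by simp
  fix s :: int
  show "min (frac t) (1 - frac t) \<le> \<bar>of_int s - t\<bar>"
  proof (cases "s \<le> \<lfloor>t\<rfloor>")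
    case True then have "real_of_int s \<le> of_int \<lfloor>t\<rfloor>" by linarith
    then show ?thesis unfolding frac_def by linarith
  next
    case False then have "real_of_int s \<ge> of_int \<lfloor>t\<rfloor> + 1" by linarith
    then show ?thesis unfolding frac_def by linarith
  qed
qed

lemma irrational_approx_large:
  fixes \<theta> \<alpha> \<epsilon> :: real and N :: int
  assumes "\<theta> \<notin> \<rat>" "\<epsilon> > 0"
  obtains m p :: int where "N < \<bar>m\<bar>" "N < \<bar>p\<bar>" "\<bar>of_int m * \<theta> - of_int p - \<alpha>\<bar> < \<epsilon>"
proof -
  have "\<theta> \<noteq> 0" using assms(1) by auto
  define x where "x = (\<bar>N\<bar> + \<bar>\<alpha>\<bar> + \<epsilon>) / \<bar>\<theta>\<bar>"
  define K where "K = \<lceil>x\<rceil> + \<bar>N\<bar>"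
  have "0 < x" using assms(2) \<open>\<theta> \<noteq> 0\<close> by (simp add: x_def add_nonneg_pos)
  then have "0 < \<lceil>x\<rceil>" by simp
  moreover have "x \<le> of_int \<lceil>x\<rceil>" by (rule le_of_int_ceiling)
  ultimately have K: "x \<le> of_int K" "\<bar>N\<bar> < K"
    unfolding K_def by (simp_all add: add_increasing2)
  \<comment> \<open>approximating the shifted target \<open>\<alpha> - K \<theta>\<close> produces a solution \<open>m = k + K\<close> beyond \<open>K\<close>\<close>
  obtain h k :: int where "k > 0" and hk: "\<bar>of_int k * \<theta> - of_int h - (\<alpha> - of_int K * \<theta>)\<bar> < \<epsilon>"
    using sequence_of_fractional_parts_is_dense[OF assms] by metis
  define m where "m = k + K"
  have close: "\<bar>of_int m * \<theta> - of_int h - \<alpha>\<bar> < \<epsilon>"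
    using hk by (simp add: m_def algebra_simps)
  have "K < m" using \<open>k > 0\<close> by (simp add: m_def)
  then have "N < \<bar>m\<bar>" using K(2) by linarith
  have "\<bar>N\<bar> + \<bar>\<alpha>\<bar> + \<epsilon> \<le> of_int K * \<bar>\<theta>\<bar>"
    using K(1) \<open>\<theta> \<noteq> 0\<close> by (simp add: x_def pos_divide_le_eq)
  also have "\<dots> < of_int m * \<bar>\<theta>\<bar>"
    using \<open>K < m\<close> \<open>\<theta> \<noteq> 0\<close> by (simp add: mult_strict_right_mono)
  also have "\<dots> = \<bar>of_int m * \<theta>\<bar>"
    using \<open>K < m\<close> K(2) by (simp add: abs_mult)
  finally have "real_of_int N < \<bar>of_int h\<bar>" using close by linarith
  then have "N < \<bar>h\<bar>" by linarith
  with \<open>N < \<bar>m\<bar>\<close> close show ?thesis using that by blast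
qed

lemma coprime_solutions_large:
  fixes P Q :: int
  assumes "coprime P Q" "P \<noteq> 0" "Q \<noteq> 0"
  obtains m p where "N < \<bar>m\<bar>" "N < \<bar>p\<bar>" "m * Q - p * P = T"
proof -
  obtain u v where "u * Q + v * P = 1"
    using assms(1) bezout_int[of Q P] by (metis coprime_commute coprime_iff_gcd_eq_1)
  \<comment> \<open>shifting a particular solution \<open>(T u, - T v)\<close> by multiples of \<open>(P, Q)\<close>\<close>
  define r where "r = \<bar>N\<bar> + \<bar>T * u\<bar> + \<bar>T * v\<bar> + 1"
  have "r \<le> \<bar>r * P\<bar>" "r \<le> \<bar>r * Q\<bar>"
    using assms(2,3) by (simp_all add: abs_mult r_def)
  then have "N < \<bar>T * u + r * P\<bar>" "N < \<bar>- T * v + r * Q\<bar>"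
    unfolding r_def by linarith+
  moreover have "(T * u + r * P) * Q - (- T * v + r * Q) * P = T * (u * Q + v * P)"
    by (simp add: algebra_simps)
  ultimately show ?thesis
    using that \<open>u * Q + v * P = 1\<close> by simp
qed

lemma real_gcd_eqI:
  fixes x y g :: real and P Q :: int
  assumes "g > 0" "x = P * g" "y = Q * g" "coprime P Q" "Q \<noteq> 0"
  shows "real_gcd x y = g"
  unfolding real_gcd_def
proof (rule Greatest_equality)
  show "g > 0 \<and> x / g \<in> \<int> \<and> y / g \<in> \<int>"
    using assms(1-3) by simp
next
  fix h assume h: "h > 0 \<and> x / h \<in> \<int> \<and> y / h \<in> \<int>"
  then obtain u v :: int where uv: "x / h = of_int u" "y / h = of_int v"
    by (meson Ints_cases)
  have "real_of_int P * (y / h) = real_of_int Q * (x / h)" using assms(2,3) by simp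
  then have "real_of_int (P * v) = real_of_int (Q * u)" using uv by simp
  then have "Q dvd P * v" by (metis dvd_triv_left of_int_eq_iff)
  then have "Q dvd v" using assms(4) by (metis coprime_commute coprime_dvd_mult_right_iff)
  moreover have "v \<noteq> 0" using uv(2) assms(1,3,5) h by auto
  ultimately have "\<bar>real_of_int Q\<bar> \<le> \<bar>of_int v\<bar>"
    by (metis dvd_imp_le_int of_int_abs of_int_le_iff)
  moreover have "h = \<bar>of_int Q\<bar> * g / \<bar>of_int v\<bar>"
  proof -
    have "\<bar>g * of_int Q\<bar> = \<bar>h * of_int v\<bar>" using uv(2) assms(3) h by (simp add: field_simps)
    then show ?thesis using assms(1) h \<open>v \<noteq> 0\<close> by (simp add: abs_mult field_simps)
  qed
  ultimately show "h \<le> g"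
    using assms(1,5) \<open>v \<noteq> 0\<close> by (simp add: divide_le_eq mult_left_mono)
qed

lemma real_gcd_cofactors:
  fixes x y :: real
  assumes "x \<noteq> 0" "y \<noteq> 0" "x / y \<in> \<rat>"
  obtains P Q :: int
  where "real_gcd x y > 0" "x = P * real_gcd x y" "y = Q * real_gcd x y" "coprime P Q"
proof -
  obtain a b' :: int where ab: "x / y = of_int a / of_int b'" "b' > 0" "coprime a b'"
    using assms(3) by (meson Rats_cases')
  define \<sigma> :: int where "\<sigma> = (if y > 0 then 1 else -1)"
  define g where "g = \<bar>y\<bar> / of_int b'"
  have "g > 0" using assms(2) ab(2) by (simp add: g_def)
  have y_eq: "y = of_int (\<sigma> * b') * g"
    using assms(2) ab(2) by (auto simp: \<sigma>_def g_def)
  moreover have x_eq: "x = of_int (\<sigma> * a) * g"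
  proof -
    have "x = y * (of_int a / of_int b')" using ab(1) assms(2) by (simp add: field_simps)
    then show ?thesis using ab(2) by (subst (asm) y_eq) (simp add: field_simps)
  qed
  moreover have cop: "coprime (\<sigma> * a) (\<sigma> * b')" using ab(3) by (simp add: \<sigma>_def)
  moreover have "\<sigma> * b' \<noteq> 0" using ab(2) by (simp add: \<sigma>_def)
  ultimately have gcd: "real_gcd x y = g" using real_gcd_eqI[OF \<open>g > 0\<close> x_eq y_eq] by blast
  from that[of "\<sigma> * a" "\<sigma> * b'"] show ?thesis
    unfolding gcd using \<open>g > 0\<close> x_eq y_eq cop by blast
qed

section \<open>Zeros of the characteristic determinant\<close>

definition exp_root :: "real \<Rightarrow> complex \<Rightarrow> int \<Rightarrow> complex" where
  "exp_root \<beta> \<gamma> m = Complex ((Arg \<gamma> + 2 * pi * of_int m) / \<beta>) (- ln (cmod \<gamma>) / \<beta>)"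

lemma Re_exp_root [simp]: "Re (exp_root \<beta> \<gamma> m) = (Arg \<gamma> + 2 * pi * of_int m) / \<beta>"
  and Im_exp_root [simp]: "Im (exp_root \<beta> \<gamma> m) = - ln (cmod \<gamma>) / \<beta>"
  by (simp_all add: exp_root_def)

lemma exp_root_eq_iff [simp]: "\<beta> \<noteq> 0 \<Longrightarrow> exp_root \<beta> \<gamma> m = exp_root \<beta> \<gamma> p \<longleftrightarrow> m = p"
  by (auto simp: exp_root_def complex_eq_iff field_simps)

lemma exp_eq_iff_exp_root:
  assumes "\<beta> \<noteq> 0" "\<gamma> \<noteq> 0"
  shows "exp (\<i> * z * of_real \<beta>) = \<gamma> \<longleftrightarrow> (\<exists>m. z = exp_root \<beta> \<gamma> m)"
proof -
  have root: "(Ln \<gamma> + of_int (2 * m) * pi * \<i>) / (\<i> * \<beta>) = exp_root \<beta> \<gamma> m" for m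
  proof -
    have "(\<i> * \<beta>) * exp_root \<beta> \<gamma> m = Ln \<gamma> + of_int (2 * m) * pi * \<i>"
      using assms by (simp add: Ln_Arg exp_root_def complex_eq_iff field_simps)
    then show ?thesis using assms by (simp add: field_simps)
  qed
  have "exp (\<i> * z * \<beta>) = \<gamma> \<longleftrightarrow> exp (\<i> * z * \<beta>) = exp (Ln \<gamma>)"
    using assms by simp
  also have "\<dots> \<longleftrightarrow> (\<exists>m::int. \<i> * z * \<beta> = Ln \<gamma> + of_int (2 * m) * pi * \<i>)"
    by (rule exp_eq)
  also have "\<dots> \<longleftrightarrow> (\<exists>m. z = exp_root \<beta> \<gamma> m)"
    unfolding root[symmetric] using assms by (auto simp: field_simps)
  finally show ?thesis .
qed

lemma Re_exp_root_diff:
  assumes "\<beta> \<noteq> 0" "\<beta>' \<noteq> 0"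
  shows "Re (exp_root \<beta> \<gamma> m - exp_root \<beta>' \<gamma>' p) =
    (2 * pi * (of_int m * \<beta>' - of_int p * \<beta>) - (\<beta> * Arg \<gamma>' - \<beta>' * Arg \<gamma>)) / (\<beta> * \<beta>')"
  using assms by (simp add: field_simps)

lemma Im_exp_root_diff:
  assumes "\<beta> \<noteq> 0" "\<beta>' \<noteq> 0"
  shows "Im (exp_root \<beta> \<gamma> m - exp_root \<beta>' \<gamma>' p) = (\<beta> * ln (cmod \<gamma>') - \<beta>' * ln (cmod \<gamma>)) / (\<beta> * \<beta>')"
  using assms by (simp add: field_simps)

lemma exp_root_Re_spacing:
  assumes "\<beta> \<noteq> 0" "m \<noteq> p"
  shows "2 * pi / \<bar>\<beta>\<bar> \<le> \<bar>Re (exp_root \<beta> \<gamma> m) - Re (exp_root \<beta> \<gamma> p)\<bar>"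
proof -
  have "Re (exp_root \<beta> \<gamma> m) - Re (exp_root \<beta> \<gamma> p) = 2 * pi * of_int (m - p) / \<beta>"
    using assms(1) by (simp add: field_simps)
  then have "\<bar>Re (exp_root \<beta> \<gamma> m) - Re (exp_root \<beta> \<gamma> p)\<bar> = 2 * pi * \<bar>of_int (m - p)\<bar> / \<bar>\<beta>\<bar>"
    by (simp add: abs_divide abs_mult)
  moreover have "(1::real) \<le> \<bar>of_int (m - p)\<bar>" using assms(2) by linarith
  ultimately show ?thesis using assms(1) by (simp add: divide_right_mono)
qed

lemma exp_factor_eventually_nonzero:
  assumes "\<beta> \<noteq> 0"
  shows "\<forall>\<^sub>F w in at z. \<gamma> - exp (\<i> * w * of_real \<beta>) \<noteq> 0"
proof -
  let ?f = "\<lambda>w. \<gamma> - exp (\<i> * w * of_real \<beta>)"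
  \<comment> \<open>Shifting by \<open>pi / \<beta>\<close> flips the sign of the exponential, so \<open>?f\<close> is not identically zero.\<close>
  have "exp (\<i> * (z + pi / \<beta>) * \<beta>) = - exp (\<i> * z * \<beta>)"
    using assms by (simp add: distrib_right distrib_left exp_add)
  then have "?f z \<noteq> 0 \<or> ?f (z + pi / \<beta>) \<noteq> 0" by auto
  then obtain w0 where "?f w0 \<noteq> 0" by blast
  have "?f holomorphic_on UNIV" by (intro holomorphic_intros)
  from non_zero_neighbour_alt[OF this _ _ _ _ \<open>?f w0 \<noteq> 0\<close>] show ?thesis by auto
qed

lemma zorder_exp_factor:
  assumes "\<beta> \<noteq> 0" "exp (\<i> * z * of_real \<beta>) = \<gamma>"
  shows "zorder (\<lambda>w. \<gamma> - exp (\<i> * w * of_real \<beta>)) z = 1"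
proof (rule zorder_zero_eqI')
  show "(\<lambda>w. \<gamma> - exp (\<i> * w * of_real \<beta>)) analytic_on {z}"
    by (intro analytic_intros)
  show "(deriv ^^ i) (\<lambda>w. \<gamma> - exp (\<i> * w * of_real \<beta>)) z = 0" if "i < nat 1" for i
    using that assms by simp
  have "((\<lambda>w. \<gamma> - exp (\<i> * w * of_real \<beta>)) has_field_derivative
        - (exp (\<i> * z * of_real \<beta>) * (\<i> * of_real \<beta>))) (at z)"
    by (auto intro!: derivative_eq_intros)
  moreover have "\<gamma> \<noteq> 0" using assms(2) by auto
  ultimately show "(deriv ^^ nat 1) (\<lambda>w. \<gamma> - exp (\<i> * w * of_real \<beta>)) z \<noteq> 0"
    using assms by (simp add: DERIV_imp_deriv)
qed simp

lemma zorder_prod_exp_factors: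
  fixes b :: "'n::finite \<Rightarrow> real"
  assumes "\<And>k. b k \<noteq> 0"
  shows "zorder (\<lambda>w. \<Prod>k\<in>UNIV. c k - exp (\<i> * w * of_real (b k))) z
         = int (card {k. exp (\<i> * z * of_real (b k)) = c k})"
proof -
  have "\<forall>\<^sub>F w in at z. \<forall>k. c k - exp (\<i> * w * of_real (b k)) \<noteq> 0"
    using assms exp_factor_eventually_nonzero by (intro eventually_all_finite) blast
  then have "zorder (\<lambda>w. \<Prod>k\<in>UNIV. c k - exp (\<i> * w * of_real (b k))) z
     = (\<Sum>k\<in>UNIV. zorder (\<lambda>w. c k - exp (\<i> * w * of_real (b k))) z)"
    by (intro zorder_prod_analytic analytic_intros) (auto elim!: eventually_mono)
  also have "\<dots> = (\<Sum>k\<in>UNIV. if exp (\<i> * z * of_real (b k)) = c k then 1 else 0)"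
  proof (rule sum.cong)
    fix k
    show "zorder (\<lambda>w. c k - exp (\<i> * w * of_real (b k))) z =
      (if exp (\<i> * z * of_real (b k)) = c k then 1 else 0)"
    proof (cases "exp (\<i> * z * of_real (b k)) = c k")
      case True
      then show ?thesis using zorder_exp_factor[OF assms True] by simp
    qed (auto intro!: zorder_eq_0I analytic_intros)
  qed simp
  also have "\<dots> = int (card {k. exp (\<i> * z * of_real (b k)) = c k})"
    by (simp add: sum.If_cases)
  finally show ?thesis .
qed

lemma diag_mat_mult:
  fixes f g :: "'n::finite \<Rightarrow> complex"
  shows "diag_mat f ** diag_mat g = diag_mat (\<lambda>k. f k * g k)"
proof -
  have "(\<Sum>k\<in>UNIV. (if i = k then f i else 0) * (if k = j then g k else 0))
      = (\<Sum>k\<in>UNIV. if k = i then (if i = j then f i * g i else 0) else 0)" for i j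
    by (rule sum.cong) auto
  then show ?thesis by (simp add: diag_mat_def matrix_matrix_mult_def vec_eq_iff)
qed

lemma diag_mat_add: "diag_mat f + diag_mat g = diag_mat (\<lambda>k. f k + g k)"
  and diag_mat_diff: "diag_mat f - diag_mat g = diag_mat (\<lambda>k. f k - g k)"
  and diag_mat_uminus: "- diag_mat f = diag_mat (\<lambda>k. - f k)"
  and mat_1_eq_diag_mat: "mat 1 = diag_mat (\<lambda>k. 1)"
  by (simp_all add: diag_mat_def vec_eq_iff mat_def)

lemma det_diag_mat: "det (diag_mat f) = (\<Prod>k\<in>UNIV. f k)"
  by (subst det_diagonal) (auto simp: diag_mat_def)

lemma regular_bc_diag:
  assumes "\<And>k. c k \<noteq> 0"
  shows "regular_bc b (diag_mat c) (- mat 1)"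
  using assms
  by (auto simp: regular_bc_def P_minus_def P_plus_def mat_1_eq_diag_mat diag_mat_mult diag_mat_add
      diag_mat_uminus diag_mat_diff det_diag_mat if_distrib cong: if_cong)

lemma Delta0_diag:
  "Delta0 b (diag_mat c) (- mat 1) z = (\<Prod>k\<in>UNIV. c k - exp (\<i> * z * of_real (b k)))"
  unfolding Delta0_def mat_1_eq_diag_mat diag_mat_uminus diag_mat_mult diag_mat_add det_diag_mat
  by simp

definition root_family :: "('n \<Rightarrow> real) \<Rightarrow> ('n \<Rightarrow> complex) \<Rightarrow> 'n \<times> int \<Rightarrow> complex" where
  "root_family b c = (\<lambda>(k, m). exp_root (b k) (c k) m)"

lemma root_family_fibre:
  fixes b :: "'n::finite \<Rightarrow> real"
  assumes "\<And>k. b k \<noteq> 0" "\<And>k. c k \<noteq> 0"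
  shows "finite {km. root_family b c km = z}"
    and "card {km. root_family b c km = z} = card {k. exp (\<i> * z * of_real (b k)) = c k}"
proof -
  have "inj_on fst {km. root_family b c km = z}"
    using assms(1) by (auto simp: inj_on_def root_family_def)
  moreover have "fst ` {km. root_family b c km = z} = {k. exp (\<i> * z * of_real (b k)) = c k}"
  proof -
    have "exp (\<i> * z * of_real (b k)) = c k \<longleftrightarrow> (\<exists>m. z = exp_root (b k) (c k) m)" for k
      using exp_eq_iff_exp_root assms by blast
    then show ?thesis
      by (auto simp: root_family_def image_iff)
  qed
  ultimately show "finite {km. root_family b c km = z}"
    and "card {km. root_family b c km = z} = card {k. exp (\<i> * z * of_real (b k)) = c k}"
    by (metis finite finite_imageD, metis card_image)
qed

lemma zero_seq_diag_iff:
  fixes b :: "'n::finite \<Rightarrow> real"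
  assumes b_nz: "\<And>k. b k \<noteq> 0" and c_nz: "\<And>k. c k \<noteq> 0"
  shows "zero_seq (Delta0 b (diag_mat c) (- mat 1)) Lam \<longleftrightarrow>
    (\<exists>\<phi>. bij \<phi> \<and> Lam = root_family b c \<circ> \<phi>)"
proof -
  let ?\<Delta> = "Delta0 b (diag_mat c) (- mat 1)"
  have zero_order: "(if ?\<Delta> z = 0 then nat (zorder ?\<Delta> z) else 0) = card {km. root_family b c km = z}"
    for z
  proof -
    have "?\<Delta> z = 0 \<longleftrightarrow> (\<exists>k. c k - exp (\<i> * z * of_real (b k)) = 0)"
      by (simp add: Delta0_diag)
    also have "\<dots> \<longleftrightarrow> (\<exists>k. exp (\<i> * z * of_real (b k)) = c k)"
      by (metis right_minus_eq)
    finally have zero: "?\<Delta> z = 0 \<longleftrightarrow> {k. exp (\<i> * z * of_real (b k)) = c k} \<noteq> {}"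
      by blast
    have "?\<Delta> = (\<lambda>w. \<Prod>k\<in>UNIV. c k - exp (\<i> * w * of_real (b k)))"
      by (rule ext) (rule Delta0_diag)
    then have "zorder ?\<Delta> z = int (card {k. exp (\<i> * z * of_real (b k)) = c k})"
      using zorder_prod_exp_factors[of b c, OF b_nz] by simp
    then show ?thesis
      using zero root_family_fibre(2)[of b c, OF b_nz c_nz] by simp
  qed
  have root_fin: "finite {km. root_family b c km = z}" for z
    by (rule root_family_fibre(1)[of b c, OF b_nz c_nz])
  show ?thesis
  proof
    assume "zero_seq ?\<Delta> Lam"
    then have "finite {m. Lam m = z}" "card {m. Lam m = z} = card {km. root_family b c km = z}" for z
      unfolding zero_seq_def zero_order by auto
    from obtain_bij_fibres[of Lam "root_family b c", OF this(1) root_fin this(2)]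
    show "\<exists>\<phi>. bij \<phi> \<and> Lam = root_family b c \<circ> \<phi>" by metis
  next
    assume "\<exists>\<phi>. bij \<phi> \<and> Lam = root_family b c \<circ> \<phi>"
    then obtain \<phi> where "bij \<phi>" and Lam: "Lam = root_family b c \<circ> \<phi>" by blast
    show "zero_seq ?\<Delta> Lam"
      unfolding zero_seq_def zero_order Lam
      using fibres_comp_bij[OF \<open>bij \<phi>\<close> root_fin] by simp
  qed
qed

section \<open>Gaps between consecutive zeros\<close>

lemma card_roots_in_strip:
  fixes b :: "'n::finite \<Rightarrow> real"
  assumes b_nz: "\<And>k. b k \<noteq> 0" and W: "\<And>k. W \<le> 2 * pi / \<bar>b k\<bar>"
    and strip: "\<And>km. km \<in> S \<Longrightarrow> a \<le> Re (root_family b c km) \<and> Re (root_family b c km) < a + W"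
  shows "card S \<le> CARD('n)"
proof -
  have "inj_on fst S"
  proof (rule inj_onI)
    fix km km' assume "km \<in> S" "km' \<in> S" "fst km = fst km'"
    then obtain k m p where km: "km = (k, m)" "km' = (k, p)" by (metis prod.collapse)
    show "km = km'"
    proof (rule ccontr)
      assume "km \<noteq> km'"
      then have "2 * pi / \<bar>b k\<bar> \<le> \<bar>Re (exp_root (b k) (c k) m) - Re (exp_root (b k) (c k) p)\<bar>"
        using km exp_root_Re_spacing[OF b_nz] by blast
      moreover have "\<bar>Re (exp_root (b k) (c k) m) - Re (exp_root (b k) (c k) p)\<bar> < W"
        using strip[OF \<open>km \<in> S\<close>] strip[OF \<open>km' \<in> S\<close>] by (auto simp: km root_family_def)
      ultimately show False using W[of k] by simp
    qed
  qed
  then have "card S = card (fst ` S)" by (simp add: card_image)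
  also have "\<dots> \<le> CARD('n)" by (rule card_mono) auto
  finally show ?thesis .
qed

lemma consecutive_zeros_Re_spread:
  fixes b :: "'n::finite \<Rightarrow> real"
  assumes b_nz: "\<And>k. b k \<noteq> 0" and W: "\<And>k. W \<le> 2 * pi / \<bar>b k\<bar>"
    and "bij \<phi>" and Lam: "Lam = root_family b c \<circ> \<phi>" and "mono (\<lambda>m. Re (Lam m))"
  shows "W \<le> Re (Lam (m + int CARD('n))) - Re (Lam m)"
proof (rule ccontr)
  let ?I = "{m..m + int CARD('n)}"
  assume "\<not> ?thesis"
  then have "Re (Lam m) \<le> Re (Lam i) \<and> Re (Lam i) < Re (Lam m) + W" if "i \<in> ?I" for i
    using that monoD[OF \<open>mono _\<close>, of m i] monoD[OF \<open>mono _\<close>, of i "m + int CARD('n)"] by auto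
  then have "card (\<phi> ` ?I) \<le> CARD('n)"
    by (intro card_roots_in_strip[where b = b and c = c and a = "Re (Lam m)", OF b_nz W])
      (auto simp: Lam)
  moreover have "card (\<phi> ` ?I) = card ?I"
    using inj_on_subset[OF bij_is_inj[OF \<open>bij \<phi>\<close>] subset_UNIV] by (rule card_image)
  ultimately show False by simp
qed

lemma zero_seq_diag_gaps:
  fixes b :: "'n::finite \<Rightarrow> real"
  assumes b_nz: "\<And>k. b k \<noteq> 0" and c_nz: "\<And>k. c k \<noteq> 0"
    and "zero_seq (Delta0 b (diag_mat c) (- mat 1)) Lam" and mono: "\<And>m. Re (Lam m) \<le> Re (Lam (m + 1))"
  shows "\<exists>mk :: int \<Rightarrow> int. \<forall>k. mk k < mk (k + 1) \<and> mk (k + 1) \<le> mk k + int CARD('n) \<and>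
    2 * pi / ((MAX j. \<bar>b j\<bar>) * real CARD('n)) \<le> Re (Lam (mk k)) - Re (Lam (mk k - 1))"
proof -
  define n where "n = CARD('n)"
  define W where "W = 2 * pi / (MAX j. \<bar>b j\<bar>)"
  have W: "W \<le> 2 * pi / \<bar>b k\<bar>" for k
  proof -
    have "\<bar>b k\<bar> \<le> (MAX j. \<bar>b j\<bar>)" by (rule Max_ge) auto
    moreover have "0 < \<bar>b k\<bar>" using b_nz[of k] by simp
    ultimately have "0 < (MAX j. \<bar>b j\<bar>)" by linarith
    with \<open>\<bar>b k\<bar> \<le> _\<close> \<open>0 < \<bar>b k\<bar>\<close> show ?thesis
      unfolding W_def by (intro divide_left_mono mult_pos_pos) simp_all
  qed
  obtain \<phi> where "bij \<phi>" "Lam = root_family b c \<circ> \<phi>"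
    using assms(3) zero_seq_diag_iff[of b c, OF b_nz c_nz] by blast
  have "\<exists>i\<in>{i. W / n \<le> Re (Lam i) - Re (Lam (i - 1))}. m < i \<and> i \<le> m + int n" for m
    using large_step_in_block[of n W "\<lambda>i. Re (Lam i)" m]
      consecutive_zeros_Re_spread[where b = b and c = c, OF b_nz W \<open>bij \<phi>\<close> \<open>Lam = _\<close>
        mono_int_step[of "\<lambda>m. Re (Lam m)", OF mono]]
    by (auto simp: n_def)
  then obtain mk :: "int \<Rightarrow> int" where "\<And>k. W / n \<le> Re (Lam (mk k)) - Re (Lam (mk k - 1))"
    "\<And>k. mk k < mk (k + 1)" "\<And>k. mk (k + 1) \<le> mk k + int n"
    by (rule int_enumeration_bounded_gaps) blast
  moreover have "W / n = 2 * pi / ((MAX j. \<bar>b j\<bar>) * real CARD('n))"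
    by (simp add: W_def n_def)
  ultimately show ?thesis unfolding n_def by metis
qed

section \<open>Separation of two lattices of zeros\<close>

definition eventually_apart :: "(int \<Rightarrow> complex) \<Rightarrow> (int \<Rightarrow> complex) \<Rightarrow> bool" where
  "eventually_apart f g \<longleftrightarrow> (\<exists>\<delta>>0. \<exists>N. \<forall>m p. N < \<bar>m\<bar> \<longrightarrow> N < \<bar>p\<bar> \<longrightarrow> \<delta> < cmod (f m - g p))"

lemma not_eventually_apartI:
  assumes "\<And>\<delta> N. \<delta> > 0 \<Longrightarrow> \<exists>m p. N < \<bar>m\<bar> \<and> N < \<bar>p\<bar> \<and> cmod (f m - g p) \<le> \<delta>"
  shows "\<not> eventually_apart f g"
  unfolding eventually_apart_def using assms by (meson not_less)

lemma eventually_apartI: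
  assumes "d > 0" "\<And>m p. d \<le> cmod (f m - g p)"
  shows "eventually_apart f g"
  unfolding eventually_apart_def
proof (intro exI[of _ "d / 2"] conjI exI[of _ 0] allI impI)
  show "0 < d / 2" using assms(1) by simp
  show "d / 2 < cmod (f m - g p)" for m p using assms(1) assms(2)[of m p] by linarith
qed

lemma exp_roots_apart_if_Im_differ:
  assumes "\<beta> \<noteq> 0" "\<beta>' \<noteq> 0" "\<beta> * ln (cmod \<gamma>') \<noteq> \<beta>' * ln (cmod \<gamma>)"
  shows "eventually_apart (exp_root \<beta> \<gamma>) (exp_root \<beta>' \<gamma>')"
proof -
  define d where "d = \<bar>(\<beta> * ln (cmod \<gamma>') - \<beta>' * ln (cmod \<gamma>)) / (\<beta> * \<beta>')\<bar>"
  have "d > 0" using assms by (simp add: d_def)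
  moreover have "d \<le> cmod (exp_root \<beta> \<gamma> m - exp_root \<beta>' \<gamma>' p)" for m p
    using abs_Im_le_cmod[of "exp_root \<beta> \<gamma> m - exp_root \<beta>' \<gamma>' p"]
    unfolding Im_exp_root_diff[OF assms(1,2)] d_def .
  ultimately show ?thesis by (rule eventually_apartI)
qed

lemma Re_exp_root_diff_commensurable:
  assumes "\<beta> \<noteq> 0" "\<beta>' \<noteq> 0" "g > 0" "\<beta> = of_int P * g" "\<beta>' = of_int Q * g"
  shows "Re (exp_root \<beta> \<gamma> m - exp_root \<beta>' \<gamma>' p) =
    2 * pi * g * (of_int (m * Q - p * P) - (\<beta> * Arg \<gamma>' - \<beta>' * Arg \<gamma>) / (2 * pi * g)) / (\<beta> * \<beta>')"
proof -
  have lattice: "of_int m * \<beta>' - of_int p * \<beta> = g * of_int (m * Q - p * P)"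
    using assms(4,5) by (simp add: algebra_simps)
  have "2 * pi * (of_int m * \<beta>' - of_int p * \<beta>) - (\<beta> * Arg \<gamma>' - \<beta>' * Arg \<gamma>)
      = 2 * pi * g * (of_int (m * Q - p * P) - (\<beta> * Arg \<gamma>' - \<beta>' * Arg \<gamma>) / (2 * pi * g))"
    unfolding lattice using assms(3) by (simp add: field_simps)
  then show ?thesis by (simp only: Re_exp_root_diff[OF assms(1,2)])
qed

lemma exp_roots_apart_if_commensurable:
  assumes "\<beta> \<noteq> 0" "\<beta>' \<noteq> 0" "\<beta> / \<beta>' \<in> \<rat>"
    and "(\<beta> * Arg \<gamma>' - \<beta>' * Arg \<gamma>) / (2 * pi * real_gcd \<beta> \<beta>') \<notin> \<int>"
  shows "eventually_apart (exp_root \<beta> \<gamma>) (exp_root \<beta>' \<gamma>')"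
proof -
  define g where "g = real_gcd \<beta> \<beta>'"
  obtain P Q :: int where g: "g > 0" "\<beta> = P * g" "\<beta>' = Q * g"
    using real_gcd_cofactors[OF assms(1-3)] unfolding g_def by metis
  define t where "t = (\<beta> * Arg \<gamma>' - \<beta>' * Arg \<gamma>) / (2 * pi * g)"
  obtain e where "e > 0" and e: "\<And>s::int. e \<le> \<bar>of_int s - t\<bar>"
    using not_Ints_imp_bounded_away assms(4) unfolding t_def g_def by blast
  define B where "B = \<bar>\<beta> * \<beta>'\<bar>"
  have "B > 0" using assms by (simp add: B_def)
  have "2 * pi * g * e / B \<le> cmod (exp_root \<beta> \<gamma> m - exp_root \<beta>' \<gamma>' p)" for m p
  proof -
    have "\<bar>Re (exp_root \<beta> \<gamma> m - exp_root \<beta>' \<gamma>' p)\<bar> = 2 * pi * g * \<bar>of_int (m * Q - p * P) - t\<bar> / B"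
      unfolding Re_exp_root_diff_commensurable[OF assms(1,2) g(1-3)] using g(1)
      by (simp add: t_def B_def abs_mult abs_divide)
    also have "\<dots> \<ge> 2 * pi * g * e / B"
      using e[of "m * Q - p * P"] \<open>B > 0\<close> g(1) by (intro divide_right_mono mult_left_mono) auto
    finally show ?thesis using abs_Re_le_cmod order_trans by blast
  qed
  moreover have "0 < 2 * pi * g * e / B" using g(1) \<open>e > 0\<close> \<open>B > 0\<close> by simp
  ultimately show ?thesis by (intro eventually_apartI)
qed

lemma exp_roots_not_apart_if_commensurable:
  assumes "\<beta> \<noteq> 0" "\<beta>' \<noteq> 0" "\<beta> / \<beta>' \<in> \<rat>"
    and Im_eq: "\<beta> * ln (cmod \<gamma>') = \<beta>' * ln (cmod \<gamma>)"
    and "(\<beta> * Arg \<gamma>' - \<beta>' * Arg \<gamma>) / (2 * pi * real_gcd \<beta> \<beta>') \<in> \<int>"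
  shows "\<not> eventually_apart (exp_root \<beta> \<gamma>) (exp_root \<beta>' \<gamma>')"
proof (rule not_eventually_apartI)
  fix \<delta> :: real and N :: int assume "\<delta> > 0"
  define g where "g = real_gcd \<beta> \<beta>'"
  obtain P Q :: int where g: "g > 0" "\<beta> = P * g" "\<beta>' = Q * g" "coprime P Q"
    using real_gcd_cofactors[OF assms(1-3)] unfolding g_def by metis
  obtain T :: int where T: "(\<beta> * Arg \<gamma>' - \<beta>' * Arg \<gamma>) / (2 * pi * g) = of_int T"
    using assms(5) unfolding g_def by (meson Ints_cases)
  have "P \<noteq> 0" "Q \<noteq> 0" using g(2,3) assms(1,2) by auto
  then obtain m p where "N < \<bar>m\<bar>" "N < \<bar>p\<bar>" "m * Q - p * P = T"
    using coprime_solutions_large[OF g(4)] by metis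
  moreover have "exp_root \<beta> \<gamma> m - exp_root \<beta>' \<gamma>' p = 0"
  proof (rule complex_eqI)
    show "Re (exp_root \<beta> \<gamma> m - exp_root \<beta>' \<gamma>' p) = Re 0"
      unfolding Re_exp_root_diff_commensurable[OF assms(1,2) g(1-3)] T \<open>m * Q - p * P = T\<close>
      using g(1) by simp
    show "Im (exp_root \<beta> \<gamma> m - exp_root \<beta>' \<gamma>' p) = Im 0"
      unfolding Im_exp_root_diff[OF assms(1,2)] Im_eq by simp
  qed
  ultimately show "\<exists>m p. N < \<bar>m\<bar> \<and> N < \<bar>p\<bar> \<and> cmod (exp_root \<beta> \<gamma> m - exp_root \<beta>' \<gamma>' p) \<le> \<delta>"
    using \<open>\<delta> > 0\<close> by (intro exI[of _ m] exI[of _ p]) simp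
qed

lemma exp_roots_not_apart_if_incommensurable:
  assumes "\<beta> \<noteq> 0" "\<beta>' \<noteq> 0" "\<beta> / \<beta>' \<notin> \<rat>"
    and Im_eq: "\<beta> * ln (cmod \<gamma>') = \<beta>' * ln (cmod \<gamma>)"
  shows "\<not> eventually_apart (exp_root \<beta> \<gamma>) (exp_root \<beta>' \<gamma>')"
proof (rule not_eventually_apartI)
  fix \<delta> :: real and N :: int assume "\<delta> > 0"
  define r where "r = \<beta>' / \<beta>"
  have "r \<notin> \<rat>"
  proof
    assume "r \<in> \<rat>"
    then have "inverse r \<in> \<rat>" by simp
    then show False using assms(3) by (simp add: r_def)
  qed
  define \<alpha> where "\<alpha> = (\<beta> * Arg \<gamma>' - \<beta>' * Arg \<gamma>) / (2 * pi * \<beta>)"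
  have "\<delta> * \<bar>\<beta>'\<bar> / (2 * pi) > 0" using \<open>\<delta> > 0\<close> assms(2) by simp
  then obtain m p where "N < \<bar>m\<bar>" "N < \<bar>p\<bar>"
    and close: "\<bar>of_int m * r - of_int p - \<alpha>\<bar> < \<delta> * \<bar>\<beta>'\<bar> / (2 * pi)"
    using irrational_approx_large[OF \<open>r \<notin> \<rat>\<close>] by metis
  have "Re (exp_root \<beta> \<gamma> m - exp_root \<beta>' \<gamma>' p) = 2 * pi * (of_int m * r - of_int p - \<alpha>) / \<beta>'"
    unfolding Re_exp_root_diff[OF assms(1,2)] using assms(1,2) by (simp add: r_def \<alpha>_def field_simps)
  moreover have "Im (exp_root \<beta> \<gamma> m - exp_root \<beta>' \<gamma>' p) = 0"
    unfolding Im_exp_root_diff[OF assms(1,2)] Im_eq by simp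
  ultimately have "cmod (exp_root \<beta> \<gamma> m - exp_root \<beta>' \<gamma>' p) = 2 * pi * \<bar>of_int m * r - of_int p - \<alpha>\<bar> / \<bar>\<beta>'\<bar>"
    by (simp add: cmod_eq_Re abs_mult abs_divide)
  also have "\<dots> \<le> \<delta>"
    using close assms(2) by (simp add: field_simps)
  finally show "\<exists>m p. N < \<bar>m\<bar> \<and> N < \<bar>p\<bar> \<and> cmod (exp_root \<beta> \<gamma> m - exp_root \<beta>' \<gamma>' p) \<le> \<delta>"
    using \<open>N < \<bar>m\<bar>\<close> \<open>N < \<bar>p\<bar>\<close> by blast
qed

lemma exp_roots_eventually_apart_iff:
  assumes "\<beta> \<noteq> 0" "\<beta>' \<noteq> 0"
  shows "eventually_apart (exp_root \<beta> \<gamma>) (exp_root \<beta>' \<gamma>') \<longleftrightarrow>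
    \<beta> * ln (cmod \<gamma>') \<noteq> \<beta>' * ln (cmod \<gamma>) \<or>
    (\<beta> / \<beta>' \<in> \<rat> \<and> (\<beta> * Arg \<gamma>' - \<beta>' * Arg \<gamma>) / (2 * pi * real_gcd \<beta> \<beta>') \<notin> \<int>)"
  using exp_roots_apart_if_Im_differ[OF assms] exp_roots_apart_if_commensurable[OF assms]
    exp_roots_not_apart_if_commensurable[OF assms] exp_roots_not_apart_if_incommensurable[OF assms]
  by blast

section \<open>Strict regularity\<close>

lemma root_family_same_factor_dist:
  assumes "b k \<noteq> 0" "m \<noteq> p"
  shows "2 * pi / \<bar>b k\<bar> \<le> dist (root_family b c (k, m)) (root_family b c (k, p))"
proof -
  have "2 * pi / \<bar>b k\<bar> \<le> \<bar>Re (exp_root (b k) (c k) m) - Re (exp_root (b k) (c k) p)\<bar>"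
    using exp_root_Re_spacing[OF assms] by simp
  also have "\<dots> \<le> dist (root_family b c (k, m)) (root_family b c (k, p))"
    using abs_Re_le_cmod[of "exp_root (b k) (c k) m - exp_root (b k) (c k) p"]
    by (simp add: root_family_def dist_norm)
  finally show ?thesis .
qed

lemma eventually_separated_imp_apart:
  assumes "eventually_separated (root_family b c)" "j \<noteq> k"
  shows "eventually_apart (exp_root (b j) (c j)) (exp_root (b k) (c k))"
proof -
  obtain \<delta> F where "\<delta> > 0" "finite F" and sep: "\<And>i i'. i \<notin> F \<Longrightarrow> i' \<notin> F \<Longrightarrow> i \<noteq> i' \<Longrightarrow>
      \<delta> < dist (root_family b c i) (root_family b c i')"
    using assms(1) unfolding eventually_separated_def by blast
  obtain N where N: "\<And>km. km \<in> F \<Longrightarrow> \<bar>snd km\<bar> \<le> N"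
    using finite_abs_bounded[OF \<open>finite F\<close>] by metis
  have "\<delta> < cmod (exp_root (b j) (c j) m - exp_root (b k) (c k) p)" if "N < \<bar>m\<bar>" "N < \<bar>p\<bar>" for m p
    using sep[of "(j, m)" "(k, p)"] N[of "(j, m)"] N[of "(k, p)"] that assms(2)
    by (force simp: root_family_def dist_norm)
  then show ?thesis
    unfolding eventually_apart_def using \<open>\<delta> > 0\<close> by blast
qed

lemma apart_imp_eventually_separated:
  fixes b :: "'n::finite \<Rightarrow> real"
  assumes b_nz: "\<And>k. b k \<noteq> 0"
    and "\<And>j k. j \<noteq> k \<Longrightarrow> eventually_apart (exp_root (b j) (c j)) (exp_root (b k) (c k))"
  shows "eventually_separated (root_family b c)"
proof -
  obtain \<delta> N where \<delta>N: "\<And>j k. j \<noteq> k \<Longrightarrow> \<delta> j k > 0 \<and> (\<forall>m p. N j k < \<bar>m\<bar> \<longrightarrow> N j k < \<bar>p\<bar> \<longrightarrow>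
      \<delta> j k < cmod (exp_root (b j) (c j) m - exp_root (b k) (c k) p))"
    using assms(2) unfolding eventually_apart_def by metis
  define d where "d = Min (range (\<lambda>(j, k). if j = k then pi / \<bar>b j\<bar> else \<delta> j k))"
  define N0 where "N0 = Max (range (\<lambda>(j, k). N j k))"
  have "d > 0"
    unfolding d_def using \<delta>N b_nz by (subst Min_gr_iff) auto
  have d_le: "d \<le> (if j = k then pi / \<bar>b j\<bar> else \<delta> j k)" for j k
    unfolding d_def by (rule Min_le, simp, rule image_eqI[where x = "(j, k)"]) auto
  have N_le: "N j k \<le> N0" for j k
    unfolding N0_def by (rule Max_ge) auto
  have "d < dist (root_family b c (j, m)) (root_family b c (k, p))"
    if "N0 < \<bar>m\<bar>" "N0 < \<bar>p\<bar>" "(j, m) \<noteq> (k, p)" for j k m p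
  proof (cases "j = k")
    case True
    have "d \<le> pi / \<bar>b j\<bar>" using d_le[of j j] by simp
    also have "\<dots> < 2 * pi / \<bar>b j\<bar>" using b_nz[of j] by (simp add: divide_strict_right_mono)
    also have "\<dots> \<le> dist (root_family b c (j, m)) (root_family b c (k, p))"
      using root_family_same_factor_dist[of b j m p c, OF b_nz] that(3) True by simp
    finally show ?thesis .
  next
    case False
    have "N j k < \<bar>m\<bar>" "N j k < \<bar>p\<bar>" using N_le[of j k] that(1,2) by auto
    then have "\<delta> j k < cmod (exp_root (b j) (c j) m - exp_root (b k) (c k) p)"
      using \<delta>N[OF False] by blast
    then show ?thesis using d_le[of j k] False by (simp add: root_family_def dist_norm)
  qed
  moreover have "finite ((UNIV :: 'n set) \<times> {-N0..N0})" by simp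
  ultimately show ?thesis
    unfolding eventually_separated_def using \<open>d > 0\<close>
    by (intro exI[of _ d] conjI exI[of _ "UNIV \<times> {-N0..N0}"]) auto
qed

lemma strictly_regular_diag_iff:
  fixes b :: "'n::finite \<Rightarrow> real"
  assumes b_nz: "\<And>k. b k \<noteq> 0" and c_nz: "\<And>k. c k \<noteq> 0"
  shows "strictly_regular_bc b (diag_mat c) (- mat 1) \<longleftrightarrow>
    (\<forall>j k. j \<noteq> k \<longrightarrow> b j * ln (cmod (c k)) \<noteq> b k * ln (cmod (c j)) \<or>
       (b j / b k \<in> \<rat> \<and> (b j * Arg (c k) - b k * Arg (c j)) / (2 * pi * real_gcd (b j) (b k)) \<notin> \<int>))"
proof -
  define \<phi>0 :: "int \<Rightarrow> 'n \<times> int" where "\<phi>0 = from_nat_into UNIV \<circ> to_nat_on UNIV"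
  have "bij \<phi>0"
    unfolding \<phi>0_def
    by (rule bij_betw_trans[OF to_nat_on_infinite bij_betw_from_nat_into])
      (simp_all add: infinite_UNIV_int finite_prod)
  have "strictly_regular_bc b (diag_mat c) (- mat 1) \<longleftrightarrow>
      (\<exists>\<phi>. bij \<phi> \<and> asymp_separated (root_family b c \<circ> \<phi>))"
    unfolding strictly_regular_bc_def zero_seq_diag_iff[of b c, OF b_nz c_nz] using regular_bc_diag[of c b, OF c_nz]
    by blast
  also have "\<dots> \<longleftrightarrow> eventually_separated (root_family b c)"
    using \<open>bij \<phi>0\<close>
    by (auto simp: asymp_separated_iff_eventually_separated eventually_separated_comp_bij)
  also have "\<dots> \<longleftrightarrow> (\<forall>j k. j \<noteq> k \<longrightarrow> eventually_apart (exp_root (b j) (c j)) (exp_root (b k) (c k)))"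
    using eventually_separated_imp_apart[of b c] apart_imp_eventually_separated[of b c, OF b_nz] by blast
  finally show ?thesis
    by (simp add: exp_roots_eventually_apart_iff b_nz)
qed

section \<open>Antiperiodic boundary conditions\<close>

lemma gcd_quotient_Ints_iff_even:
  assumes "g > 0" "\<beta> = of_int P * g" "\<beta>' = of_int Q * g"
  shows "(\<beta> * pi - \<beta>' * pi) / (2 * pi * g) \<in> \<int> \<longleftrightarrow> even (P - Q)"
proof -
  have quotient: "(\<beta> * pi - \<beta>' * pi) / (2 * pi * g) = of_int (P - Q) / 2"
    using assms by (simp add: field_simps)
  have "(of_int (P - Q) / 2 :: real) \<in> \<int> \<longleftrightarrow> even (P - Q)"
  proof
    assume "(of_int (P - Q) / 2 :: real) \<in> \<int>"
    then obtain r where "of_int (P - Q) / 2 = (of_int r :: real)" by (meson Ints_cases)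
    then have "real_of_int (P - Q) = real_of_int (2 * r)" by simp
    then have "P - Q = 2 * r" by (simp only: of_int_eq_iff)
    then show "even (P - Q)" by simp
  next
    assume "even (P - Q)"
    then obtain r where "P - Q = 2 * r" by blast
    then have "(of_int (P - Q) / 2 :: real) = of_int r" by simp
    then show "(of_int (P - Q) / 2 :: real) \<in> \<int>" by simp
  qed
  then show ?thesis unfolding quotient .
qed

lemma two_power_odd_eq_imp_eq:
  fixes A B :: int
  assumes "2 ^ x * A = 2 ^ y * B" "odd A" "odd B"
  shows "x = y"
  using multiplicity_decomposeI[of "2 ^ x * A" 2 x A] multiplicity_decomposeI[of "2 ^ y * B" 2 y B] assms
  by simp

lemma antiperiodic_pair_iff:
  fixes M M' :: int and a a' :: nat and b0 :: real
  assumes "b0 > 0" "odd M" "odd M'"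
  defines "\<beta> \<equiv> 2 ^ a * of_int M * b0" and "\<beta>' \<equiv> 2 ^ a' * of_int M' * b0"
  shows "\<beta> / \<beta>' \<in> \<rat> \<and> (\<beta> * pi - \<beta>' * pi) / (2 * pi * real_gcd \<beta> \<beta>') \<notin> \<int> \<longleftrightarrow> a \<noteq> a'"
proof -
  have "M \<noteq> 0" "M' \<noteq> 0" using assms(2,3) by auto
  then have "\<beta> \<noteq> 0" "\<beta>' \<noteq> 0" using assms(1) by (simp_all add: \<beta>_def \<beta>'_def)
  have "\<beta> / \<beta>' = of_int (2 ^ a * M) / of_int (2 ^ a' * M')"
    using assms(1) by (simp add: \<beta>_def \<beta>'_def)
  then have rat: "\<beta> / \<beta>' \<in> \<rat>" by simp
  obtain P Q :: int where g: "real_gcd \<beta> \<beta>' > 0" "\<beta> = P * real_gcd \<beta> \<beta>'" "\<beta>' = Q * real_gcd \<beta> \<beta>'"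
    and "coprime P Q"
    using real_gcd_cofactors[OF \<open>\<beta> \<noteq> 0\<close> \<open>\<beta>' \<noteq> 0\<close> rat] by metis
  have "of_int P * \<beta>' = of_int Q * \<beta>" by (subst g(2), subst g(3)) simp
  then have "real_of_int (2 ^ a' * (P * M')) = real_of_int (2 ^ a * (Q * M))"
    using assms(1) by (simp add: \<beta>_def \<beta>'_def algebra_simps)
  then have cross: "2 ^ a' * (P * M') = 2 ^ a * (Q * M)" by (simp only: of_int_eq_iff)
  have "even (P - Q) \<longleftrightarrow> a = a'"
  proof
    assume "even (P - Q)"
    moreover have "\<not> (even P \<and> even Q)"
      using \<open>coprime P Q\<close> coprime_common_divisor_int[of P Q 2] by auto
    ultimately have "odd P" "odd Q" by auto
    then show "a = a'" using two_power_odd_eq_imp_eq[OF cross] assms(2,3) by simp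
  next
    assume "a = a'"
    then have "P * M' = Q * M" using cross by simp
    then have "even P \<longleftrightarrow> even Q" using assms(2,3) by (metis even_mult_iff)
    then show "even (P - Q)" by auto
  qed
  then show ?thesis
    using rat gcd_quotient_Ints_iff_even[OF g] by blast
qed

lemma rational_ratios_common_measure:
  fixes b :: "'n::finite \<Rightarrow> real"
  assumes "\<beta> \<noteq> 0" "\<And>k. b k / \<beta> \<in> \<rat>"
  obtains \<gamma> :: real and N :: "'n \<Rightarrow> int" where "\<gamma> \<noteq> 0" "\<And>k. b k = of_int (N k) * \<gamma>"
proof -
  have "\<forall>k. \<exists>u v :: int. b k / \<beta> = of_int u / of_int v \<and> v > 0"
    using assms(2) by (meson Rats_cases')
  then obtain u v :: "'n \<Rightarrow> int" where uv: "\<And>k. b k / \<beta> = of_int (u k) / of_int (v k)" "\<And>k. v k > 0"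
    by metis
  define D where "D = (\<Prod>k\<in>UNIV. v k)"
  have "D > 0" unfolding D_def using uv(2) by (simp add: prod_pos)
  have D: "D = v k * (D div v k)" for k
    unfolding D_def by (simp add: dvd_prod_eqI)
  have eq: "b k = of_int (u k * (D div v k)) * (\<beta> / of_int D)" for k
  proof -
    have "b k = of_int (u k) / of_int (v k) * \<beta>" using uv(1)[of k] assms(1) by (simp add: field_simps)
    also have "\<dots> = of_int (u k) * of_int (D div v k) / of_int D * \<beta>"
    proof -
      have "D div v k \<noteq> 0" using D[of k] \<open>D > 0\<close> by (metis mult_zero_right less_irrefl)
      then show ?thesis using uv(2)[of k] by (subst (2) D[of k]) (simp add: field_simps)
    qed
    finally show ?thesis by simp
  qed
  moreover have "\<beta> / of_int D \<noteq> 0" using assms(1) \<open>D > 0\<close> by simp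
  ultimately show ?thesis
    by (intro that[of "\<beta> / of_int D" "\<lambda>k. u k * (D div v k)"])
qed

lemma two_adic_form:
  fixes b :: "'n \<Rightarrow> real" and N :: "'n \<Rightarrow> int"
  assumes "\<gamma> \<noteq> 0" "\<And>k. N k \<noteq> 0" "\<And>k. b k = of_int (N k) * \<gamma>"
  obtains b0 :: real and M :: "'n \<Rightarrow> int" and a :: "'n \<Rightarrow> nat"
  where "b0 > 0" "\<And>k. odd (M k)" "\<And>k. b k = 2 ^ a k * of_int (M k) * b0"
proof
  define a where "a k = multiplicity 2 (N k)" for k
  define \<sigma> :: int where "\<sigma> = (if \<gamma> > 0 then 1 else -1)"
  show "\<bar>\<gamma>\<bar> > 0" using assms(1) by simp
  show "odd (\<sigma> * (N k div 2 ^ a k))" for k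
    using multiplicity_decompose[of "N k" 2] assms(2) by (simp add: a_def \<sigma>_def)
  show "b k = 2 ^ a k * of_int (\<sigma> * (N k div 2 ^ a k)) * \<bar>\<gamma>\<bar>" for k
  proof -
    have "N k = 2 ^ a k * (N k div 2 ^ a k)"
      unfolding a_def by (simp add: multiplicity_dvd)
    then have "real_of_int (N k) = 2 ^ a k * of_int (N k div 2 ^ a k)"
      by (metis of_int_mult of_int_numeral of_int_power)
    moreover have "\<gamma> = of_int \<sigma> * \<bar>\<gamma>\<bar>" using assms(1) by (simp add: \<sigma>_def)
    ultimately show ?thesis by (subst assms(3), simp add: algebra_simps)
  qed
qed

lemma antiperiodic_criterion:
  fixes b :: "'n::finite \<Rightarrow> real"
  assumes b_nz: "\<And>k. b k \<noteq> 0"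
  shows "(\<forall>j k. j \<noteq> k \<longrightarrow> b j / b k \<in> \<rat> \<and> (b j * pi - b k * pi) / (2 * pi * real_gcd (b j) (b k)) \<notin> \<int>)
     \<longleftrightarrow> (\<exists>b0 > 0. \<exists>M :: 'n \<Rightarrow> int. \<exists>a :: 'n \<Rightarrow> nat.
            (\<forall>k. odd (M k)) \<and> inj a \<and> (\<forall>k. b k = 2 ^ a k * of_int (M k) * b0))"
    (is "?pairs \<longleftrightarrow> ?form")
proof
  assume ?form
  then obtain b0 M a where "b0 > 0" "\<And>k. odd (M k)" "inj a" "\<And>k. b k = 2 ^ a k * of_int (M k) * b0"
    by blast
  then show ?pairs
    using antiperiodic_pair_iff[of b0] by (simp add: inj_eq)
next
  assume pairs: ?pairs
  have "b k / b undefined \<in> \<rat>" for k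
    using pairs b_nz by (cases "k = undefined") auto
  then obtain \<gamma> N where "\<gamma> \<noteq> 0" and N: "\<And>k. b k = of_int (N k) * \<gamma>"
    using rational_ratios_common_measure[where b = b, OF b_nz] by metis
  moreover have "N k \<noteq> 0" for k using N[of k] b_nz[of k] by auto
  ultimately obtain b0 M a where "b0 > 0" and odd_M: "\<And>k. odd (M k)"
    and form: "\<And>k. b k = 2 ^ a k * of_int (M k) * b0"
    using two_adic_form[of \<gamma> N b] by metis
  have "inj a"
  proof (rule injI, rule ccontr)
    fix j k assume "a j = a k" "j \<noteq> k"
    then have "b j / b k \<in> \<rat> \<and> (b j * pi - b k * pi) / (2 * pi * real_gcd (b j) (b k)) \<notin> \<int>"
      using pairs by blast
    then show False
      using antiperiodic_pair_iff[of b0 "M j" "M k" "a j" "a k"] \<open>b0 > 0\<close> odd_M \<open>a j = a k\<close>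
      unfolding form by simp
  qed
  then show ?form using odd_M form \<open>b0 > 0\<close> by blast
qed

theorem lemma5p18:
  fixes b :: "'n::finite \<Rightarrow> real" and c :: "'n \<Rightarrow> complex"
  assumes b_nz: "\<And>k. b k \<noteq> 0"
    and c_nz: "\<And>k. c k \<noteq> 0"
  defines "C \<equiv> diag_mat c"
    and "D \<equiv> - (mat 1 :: complex^'n^'n)"
  shows
    "regular_bc b C D
     \<and> (\<forall>Lam. zero_seq (Delta0 b C D) Lam \<and> (\<forall>m. Re (Lam m) \<le> Re (Lam (m + 1))) \<longrightarrow>
          (\<exists>mk :: int \<Rightarrow> int. \<forall>k.
              mk k < mk (k + 1) \<and> mk (k + 1) \<le> mk k + int CARD('n) \<and>
              Re (Lam (mk k)) - Re (Lam (mk k - 1))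
                \<ge> 2 * pi / ((MAX j. \<bar>b j\<bar>) * real CARD('n))))
     \<and> ((\<forall>j k. j \<noteq> k \<longrightarrow> b j * ln (cmod (c k)) \<noteq> b k * ln (cmod (c j)))
          \<longrightarrow> strictly_regular_bc b C D)
     \<and> (strictly_regular_bc b C D \<longleftrightarrow>
          (\<forall>j k. j \<noteq> k \<longrightarrow>
             b j * ln (cmod (c k)) \<noteq> b k * ln (cmod (c j))
             \<or> (b j / b k \<in> \<rat> \<and>
                (b j * Arg (c k) - b k * Arg (c j)) / (2 * pi * real_gcd (b j) (b k)) \<notin> \<int>)))
     \<and> ((\<forall>k. c k = 1) \<and> CARD('n) \<ge> 2 \<longrightarrow> \<not> strictly_regular_bc b C D)
     \<and> ((\<forall>k. c k = -1) \<longrightarrow>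
          (strictly_regular_bc b C D \<longleftrightarrow>
             (\<exists>b0 > 0. \<exists>M :: 'n \<Rightarrow> int. \<exists>a :: 'n \<Rightarrow> nat.
                 (\<forall>k. odd (M k)) \<and> inj a \<and> (\<forall>k. b k = 2 ^ a k * of_int (M k) * b0))))
     \<and> ((\<forall>k. c k = -1) \<and> (\<exists>a. bij_betw a (UNIV :: 'n set) {1..CARD('n)} \<and> (\<forall>k. b k = 2 ^ a k))
          \<longrightarrow> strictly_regular_bc b C D)"
proof -
  note SR = strictly_regular_diag_iff[of b c, OF b_nz c_nz, folded C_def D_def]
  have gaps: "zero_seq (Delta0 b C D) Lam \<and> (\<forall>m. Re (Lam m) \<le> Re (Lam (m + 1))) \<Longrightarrow>
    \<exists>mk :: int \<Rightarrow> int. \<forall>k. mk k < mk (k + 1) \<and> mk (k + 1) \<le> mk k + int CARD('n) \<and>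
      2 * pi / ((MAX j. \<bar>b j\<bar>) * real CARD('n)) \<le> Re (Lam (mk k)) - Re (Lam (mk k - 1))" for Lam
    unfolding C_def D_def using zero_seq_diag_gaps[of b c Lam, OF b_nz c_nz] by blast
  have periodic: "\<not> strictly_regular_bc b C D" if ones: "\<forall>k. c k = 1" and "CARD('n) \<ge> 2"
  proof -
    obtain j k :: 'n where "j \<noteq> k"
      using \<open>CARD('n) \<ge> 2\<close> card_le_Suc0_iff_eq[of "UNIV :: 'n set"] by fastforce
    then show ?thesis unfolding SR using ones by auto
  qed
  have antiperiodic: "strictly_regular_bc b C D \<longleftrightarrow>
    (\<exists>b0 > 0. \<exists>M :: 'n \<Rightarrow> int. \<exists>a :: 'n \<Rightarrow> nat.
       (\<forall>k. odd (M k)) \<and> inj a \<and> (\<forall>k. b k = 2 ^ a k * of_int (M k) * b0))" if "\<forall>k. c k = -1"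
  proof -
    have "Arg (- 1) = pi" using Arg_of_real[of "- 1"] by simp
    then show ?thesis
      unfolding SR antiperiodic_criterion[of b, OF b_nz, symmetric] using that by simp
  qed
  have powers_of_two: "\<exists>b0 > 0. \<exists>M :: 'n \<Rightarrow> int. \<exists>a' :: 'n \<Rightarrow> nat.
       (\<forall>k. odd (M k)) \<and> inj a' \<and> (\<forall>k. b k = 2 ^ a' k * of_int (M k) * b0)"
    if "bij_betw a (UNIV :: 'n set) {1..CARD('n)}" "\<forall>k. b k = 2 ^ a k" for a
    using that bij_betw_imp_inj_on[OF that(1)]
    by (intro exI[of _ "1::real"] conjI exI[of _ "\<lambda>_. 1::int"] exI[of _ a]) simp_all
  show ?thesis
    using regular_bc_diag[of c b, OF c_nz, folded C_def D_def] gaps SR periodic antiperiodic powers_of_two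
    by (intro conjI; blast)
qed

end
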